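(* Let $A$ be a vector space and give $\mathrm{Sub}\,A$ the coarse open support topology. Then $\mathrm{Sub}\,A$ is a sober space, and for every $V\in\mathrm{Sub}\,A$ the complement of the closure of $\{V\}$ is $\{W\in\mathrm{Sub}\,A: V\not\subset W\}$.
   Context: $\mathrm{Sub}\,A$ is the set of linear subspaces of $A$. The coarse open support topology on $\mathrm{Sub}\,A$ is the coarsest topology in which every set $\check a=\{V\in\mathrm{Sub}\,A: a\notin V\}$, $a\in A$, is open. A space is sober if every irreducible closed set is the closure of a unique point. *)

theory Defs
  imports "HOL-Analysis.Analysis"
begin

text \<open>A vector space over a field 'k with carrier the type 'v is given by a scalar
  multiplication smul satisfying vector_space smul.  Sub A is the set of its linear subspaces.\<close>
definition Sub :: "('k::field \<Rightarrow> 'v::ab_group_add \<Rightarrow> 'v) \<Rightarrow> 'v set set" where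
  "Sub smul = {V. module.subspace smul V}"

text \<open>The coarse open support topology: the coarsest topology on Sub A in which every set
  {V in Sub A. a not in V} is open, i.e. the topology on Sub A generated by these sets as subbasis.\<close>
definition coarse_open_support_topology ::
  "('k::field \<Rightarrow> 'v::ab_group_add \<Rightarrow> 'v) \<Rightarrow> 'v set topology" where
  "coarse_open_support_topology smul =
     topology (arbitrary union_of
       (finite intersection_of (\<lambda>U. \<exists>a. U = {V \<in> Sub smul. a \<notin> V}) relative_to Sub smul))"

definition irreducible_in :: "'a topology \<Rightarrow> 'a set \<Rightarrow> bool" where
  "irreducible_in X C \<longleftrightarrow> C \<noteq> {} \<and> C \<subseteq> topspace X \<and>
     (\<forall>F1 F2. closedin X F1 \<and> closedin X F2 \<and> C \<subseteq> F1 \<union> F2 \<longrightarrow> C \<subseteq> F1 \<or> C \<subseteq> F2)"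

definition sober_space :: "'a topology \<Rightarrow> bool" where
  "sober_space X \<longleftrightarrow>
     (\<forall>C. closedin X C \<and> irreducible_in X C \<longrightarrow> (\<exists>!x. x \<in> topspace X \<and> C = X closure_of {x}))"

end

theory Submission
  imports Defs
begin

text \<open>Every open neighbourhood of a subspace V contains a basic one, the subspaces avoiding
  some finite set A with A disjoint from V. Hence the specialisation order is inclusion:
  the closure of {V} consists of the subspaces containing V, which makes the space T0.
  For an irreducible closed set C the intersection of its members is again a subspace, and it
  lies in C: a basic neighbourhood of it missing C would cover C by the finitely many closed
  sets {W. a \<in> W}, a \<in> A, so by irreducibility some a \<in> A would lie in every member of C.
  Closed sets are upward closed, so C is the closure of this generic point.\<close>

lemma irreducible_in_subset_finite_Union:
  assumes "irreducible_in X C" "finite A" "\<And>a. a \<in> A \<Longrightarrow> closedin X (F a)"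
    and "C \<subseteq> (\<Union>a\<in>A. F a)"
  shows "\<exists>a\<in>A. C \<subseteq> F a"
  using assms(2-4)
proof (induction A rule: finite_induct)
  case empty
  then show ?case
    using assms(1) by (simp add: irreducible_in_def)
next
  case (insert b A)
  then have "closedin X (F b)" "closedin X (\<Union>a\<in>A. F a)"
    "C \<subseteq> F b \<union> (\<Union>a\<in>A. F a)"
    by (auto intro: closedin_Union)
  then have "C \<subseteq> F b \<or> C \<subseteq> (\<Union>a\<in>A. F a)"
    using assms(1) unfolding irreducible_in_def by blast
  then show ?case
    using insert by auto
qed

lemma Inter_mem_Sub:
  assumes "vector_space smul" "\<V> \<subseteq> Sub smul"
  shows "\<Inter>\<V> \<in> Sub smul"
proof -
  have "module smul"
    using assms(1) unfolding vector_space_def module_def .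
  with assms(2) show ?thesis
    unfolding Sub_def by (simp add: module.subspace_Inter subset_iff)
qed

lemma sober_spaceI:
  assumes "t0_space X"
    and "\<And>C. closedin X C \<Longrightarrow> irreducible_in X C \<Longrightarrow> \<exists>x\<in>topspace X. C = X closure_of {x}"
  shows "sober_space X"
  using assms unfolding sober_space_def t0_space_closure_of_sing by metis

lemma topspace_coarse_open_support_topology [simp]:
  "topspace (coarse_open_support_topology smul) = Sub smul"
  unfolding coarse_open_support_topology_def by simp

lemma openin_coarse_open_support_avoiding:
  "openin (coarse_open_support_topology smul) {V \<in> Sub smul. a \<notin> V}"
  unfolding coarse_open_support_topology_def openin_subbase
  by (intro arbitrary_union_of_inc relative_to_subset_inc finite_intersection_of_inc) blast+

lemma closedin_coarse_open_support_containing: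
  "closedin (coarse_open_support_topology smul) {V \<in> Sub smul. a \<in> V}"
proof -
  have "{V \<in> Sub smul. a \<in> V} =
      topspace (coarse_open_support_topology smul) - {V \<in> Sub smul. a \<notin> V}"
    by auto
  then show ?thesis
    by (simp only:) (intro closedin_diff closedin_topspace openin_coarse_open_support_avoiding)
qed

lemma openin_coarse_open_support_basic_nbhd:
  assumes "openin (coarse_open_support_topology smul) S" "V \<in> S"
  obtains A where "finite A" "A \<inter> V = {}" "{W \<in> Sub smul. A \<inter> W = {}} \<subseteq> S"
proof -
  define avoiding where "avoiding a = {W \<in> Sub smul. a \<notin> W}" for a
  have "(arbitrary union_of (finite intersection_of (\<lambda>U. U \<in> range avoiding)
      relative_to Sub smul)) S"
    using assms(1) unfolding coarse_open_support_topology_def openin_subbase avoiding_def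
    by (simp add: image_def eq_commute)
  then obtain B where "B \<subseteq> S" "V \<in> B"
    and "(finite intersection_of (\<lambda>U. U \<in> range avoiding) relative_to Sub smul) B"
    using assms(2) unfolding union_of_def by blast
  then obtain F where F: "finite F" "F \<subseteq> range avoiding" "B = Sub smul \<inter> \<Inter>F"
    unfolding relative_to_def intersection_of_def by auto
  then obtain A where "finite A" "F = avoiding ` A"
    by (meson finite_subset_image)
  then have "B = {W \<in> Sub smul. A \<inter> W = {}}"
    using F(3) unfolding avoiding_def by auto
  then show thesis
    using that \<open>finite A\<close> \<open>V \<in> B\<close> \<open>B \<subseteq> S\<close> by blast
qed

lemma closure_of_singleton_coarse_open_support:
  assumes "V \<in> Sub smul"
  shows "coarse_open_support_topology smul closure_of {V} = {W \<in> Sub smul. V \<subseteq> W}"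
proof
  let ?X = "coarse_open_support_topology smul"
  have "{W \<in> Sub smul. V \<subseteq> W} = topspace ?X - (\<Union>a\<in>V. {W \<in> Sub smul. a \<notin> W})"
    by auto
  moreover have "openin ?X (\<Union>a\<in>V. {W \<in> Sub smul. a \<notin> W})"
    by (intro openin_Union) (auto intro: openin_coarse_open_support_avoiding)
  ultimately have "closedin ?X {W \<in> Sub smul. V \<subseteq> W}"
    by (simp only:) (intro closedin_diff closedin_topspace)
  then show "?X closure_of {V} \<subseteq> {W \<in> Sub smul. V \<subseteq> W}"
    using assms by (intro closure_of_minimal) auto
  show "{W \<in> Sub smul. V \<subseteq> W} \<subseteq> ?X closure_of {V}"
  proof (clarsimp simp: in_closure_of)
    fix W T
    assume "W \<in> Sub smul" "V \<subseteq> W" "W \<in> T" "openin ?X T"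
    obtain A where "finite A" "A \<inter> W = {}" "{U \<in> Sub smul. A \<inter> U = {}} \<subseteq> T"
      using \<open>openin ?X T\<close> \<open>W \<in> T\<close> by (rule openin_coarse_open_support_basic_nbhd)
    with \<open>V \<subseteq> W\<close> assms show "V \<in> T"
      by blast
  qed
qed

lemma t0_space_coarse_open_support_topology:
  "t0_space (coarse_open_support_topology smul)"
  unfolding t0_space_closure_of_sing
  by (simp add: closure_of_singleton_coarse_open_support set_eq_iff) blast

lemma closed_irreducible_coarse_open_support_eq_closure_of_Inter:
  assumes "closedin (coarse_open_support_topology smul) C"
    and "irreducible_in (coarse_open_support_topology smul) C"
    and "\<Inter>C \<in> Sub smul"
  shows "C = coarse_open_support_topology smul closure_of {\<Inter>C}"
proof -
  let ?X = "coarse_open_support_topology smul"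
  have "C \<subseteq> Sub smul"
    using assms(2) by (simp add: irreducible_in_def)
  have "\<Inter>C \<in> ?X closure_of C"
    unfolding in_closure_of
  proof (intro conjI allI impI)
    show "\<Inter>C \<in> topspace ?X"
      using assms(3) by simp
    fix T
    assume T: "\<Inter>C \<in> T \<and> openin ?X T"
    obtain A where A: "finite A" "A \<inter> \<Inter>C = {}" "{W \<in> Sub smul. A \<inter> W = {}} \<subseteq> T"
      using T by (elim conjE openin_coarse_open_support_basic_nbhd)
    show "\<exists>W. W \<in> C \<and> W \<in> T"
    proof (rule ccontr)
      assume "\<nexists>W. W \<in> C \<and> W \<in> T"
      with A(3) \<open>C \<subseteq> Sub smul\<close>
      have "C \<subseteq> (\<Union>a\<in>A. {W \<in> Sub smul. a \<in> W})"
        by blast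
      then obtain a where "a \<in> A" "C \<subseteq> {W \<in> Sub smul. a \<in> W}"
        using irreducible_in_subset_finite_Union[OF assms(2) A(1),
            where F = "\<lambda>a. {W \<in> Sub smul. a \<in> W}"]
        by (auto simp: closedin_coarse_open_support_containing)
      then have "a \<in> \<Inter>C"
        by blast
      with A(2) \<open>a \<in> A\<close> show False
        by blast
    qed
  qed
  then have "\<Inter>C \<in> C"
    unfolding closure_of_closedin[OF assms(1)] .
  show ?thesis
  proof
    show "C \<subseteq> ?X closure_of {\<Inter>C}"
      using \<open>C \<subseteq> Sub smul\<close>
      by (auto simp: closure_of_singleton_coarse_open_support[OF assms(3)])
    show "?X closure_of {\<Inter>C} \<subseteq> C"
      using assms(1) \<open>\<Inter>C \<in> C\<close> by (intro closure_of_minimal) auto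
  qed
qed

theorem lemma3p5:
  fixes smul :: "'k::field \<Rightarrow> 'v::ab_group_add \<Rightarrow> 'v"
  assumes "vector_space smul"
  shows "sober_space (coarse_open_support_topology smul) \<and>
    (\<forall>V \<in> Sub smul.
       topspace (coarse_open_support_topology smul) -
         (coarse_open_support_topology smul) closure_of {V}
       = {W \<in> Sub smul. \<not> V \<subseteq> W})"
proof
  let ?X = "coarse_open_support_topology smul"
  show "\<forall>V \<in> Sub smul. topspace ?X - ?X closure_of {V} = {W \<in> Sub smul. \<not> V \<subseteq> W}"
    by (auto simp: closure_of_singleton_coarse_open_support)
  show "sober_space ?X"
  proof (rule sober_spaceI[OF t0_space_coarse_open_support_topology])
    fix C
    assume C: "closedin ?X C" "irreducible_in ?X C"
    then have "\<Inter>C \<in> Sub smul"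
      using Inter_mem_Sub[OF assms] by (simp add: irreducible_in_def)
    with C show "\<exists>x\<in>topspace ?X. C = ?X closure_of {x}"
      using closed_irreducible_coarse_open_support_eq_closure_of_Inter by auto
  qed
qed

end
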